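(* Let $n\in\mathbb N$. Then there exists $k_0\in\mathbb N$ such that for all $k,j\in\mathbb N$ with $j\ge k\ge k_0$, $$p^{(j)}_n\le p^{(k)}_n\,\log^{(j-k+1)\log(j-k+1)}p^{(k)}_n.$$
   Context: Let $p_n$ denote the $n$-th prime number. Define $p^{(0)}_n=n$ and recursively $p^{(k+1)}_n=p_{p^{(k)}_n}$ for $k\in\mathbb N_0$. $\log$ is the natural logarithm and $\log^{t}y=(\log y)^t$. *)

theory Defs
  imports "HOL-Analysis.Analysis" "HOL-Library.Infinite_Set" "HOL-Computational_Algebra.Primes"
begin

text \<open>The n-th prime, 1-indexed: nth_prime 1 = 2, nth_prime 2 = 3, ...
  (The value at 0 is irrelevant; by convention it is 2.)\<close>
definition nth_prime :: "nat \<Rightarrow> nat" where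
  "nth_prime n = enumerate {p::nat. prime p} (n - 1)"

fun iter_prime :: "nat \<Rightarrow> nat \<Rightarrow> nat" where
  "iter_prime 0 n = n"
| "iter_prime (Suc k) n = nth_prime (iter_prime k n)"

end

theory Submission
  imports Defs "HOL-Real_Asymp.Real_Asymp"
begin

text \<open>
  Every prime power dividing C(2m, m) is at most 2m (Legendre's formula), so
  4^m / (2m) <= C(2m, m) <= (2m)^pi(2m). This Chebyshev bound gives p_y <= 8 y (log y + 1),
  hence log p_y <= log y + (11/10) log log y for all large y. With L = log p^(k)_n and
  s = i + 1, induction on i then gives log p^(k+i)_n <= L + s log s log L: one more application
  of the prime map adds at most (11/10) log (L + s log s log L), and the increment
  ((s+1) log (s+1) - s log s) log L absorbs this once log L is large, i.e. once k is large.
\<close>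

lemma multiplicity_eq_card_prime_power_dvd:
  fixes p x :: nat
  assumes p: "prime p" and "0 < x" and "x \<le> N"
  shows "multiplicity p x = card {i\<in>{1..N}. p ^ i dvd x}"
proof -
  have "p ^ multiplicity p x \<le> x"
    using \<open>0 < x\<close> by (intro dvd_imp_le multiplicity_dvd)
  moreover have "multiplicity p x < p ^ multiplicity p x"
    using prime_gt_1_nat[OF p] less_exp[of "multiplicity p x"] power_mono[of 2 p "multiplicity p x"]
    by linarith
  ultimately have "multiplicity p x \<le> N"
    using \<open>x \<le> N\<close> by linarith
  moreover have "p ^ i dvd x \<longleftrightarrow> i \<le> multiplicity p x" for i
    using p \<open>0 < x\<close> by (intro power_dvd_iff_le_multiplicity) auto
  ultimately have "{i\<in>{1..N}. p ^ i dvd x} = {1..multiplicity p x}"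
    by (intro set_eqI) (simp only: mem_Collect_eq atLeastAtMost_iff, linarith)
  then show ?thesis
    by simp
qed

lemma multiplicity_fact_nat:
  fixes p :: nat
  assumes p: "prime p" and "m \<le> N"
  shows "multiplicity p (fact m :: nat) = (\<Sum>i=1..N. m div p ^ i)"
  using \<open>m \<le> N\<close>
proof (induction m)
  case 0
  then show ?case
    by simp
next
  case (Suc m)
  have Suc_div: "Suc m div p ^ i = m div p ^ i + (if p ^ i dvd Suc m then 1 else 0)" for i
    using prime_gt_0_nat[OF p] by (auto simp: div_Suc dvd_eq_mod_eq_0)
  have "multiplicity p (fact (Suc m) :: nat) = multiplicity p (Suc m * fact m)"
    by (simp only: fact_Suc of_nat_id)
  also have "\<dots> = multiplicity p (Suc m) + multiplicity p (fact m :: nat)"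
    using p by (intro prime_elem_multiplicity_mult_distrib) auto
  also have "multiplicity p (Suc m) = (\<Sum>i=1..N. if p ^ i dvd Suc m then 1 else 0)"
    using multiplicity_eq_card_prime_power_dvd[OF p, of "Suc m" N] Suc.prems
    by (simp add: sum.If_cases Int_def conj_commute)
  also have "multiplicity p (fact m :: nat) = (\<Sum>i=1..N. m div p ^ i)"
    using Suc by simp
  also have "(\<Sum>i=1..N. if p ^ i dvd Suc m then 1 else 0) + (\<Sum>i=1..N. m div p ^ i)
      = (\<Sum>i=1..N. Suc m div p ^ i)"
    by (simp only: Suc_div sum.distrib add.commute)
  finally show ?case .
qed

lemma double_div_bounds:
  fixes n q :: nat
  assumes "0 < q"
  shows "2 * (n div q) \<le> 2 * n div q" and "2 * n div q \<le> 2 * (n div q) + 1"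
proof -
  show "2 * (n div q) \<le> 2 * n div q"
    using assms by (simp add: less_eq_div_iff_mult_less_eq)
  have "2 * n = 2 * (n mod q) + 2 * (n div q) * q"
    by (simp add: mult.assoc flip: distrib_left)
  then have "2 * n div q = 2 * (n div q) + 2 * (n mod q) div q"
    using assms by simp
  moreover have "2 * (n mod q) div q < 2"
    using assms by (simp add: div_less_iff_less_mult)
  ultimately show "2 * n div q \<le> 2 * (n div q) + 1"
    by linarith
qed

lemma fact_double_eq_central_binomial:
  "(fact (2 * n) :: nat) = fact n * fact n * (2 * n choose n)"
  using binomial_fact_lemma[of n "2 * n"] by simp

lemma prime_power_multiplicity_central_binomial_le:
  fixes p n :: nat
  assumes p: "prime p" and "0 < n"
  shows "p ^ multiplicity p (2 * n choose n) \<le> 2 * n"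
proof (rule ccontr)
  define v where "v = multiplicity p (2 * n choose n)"
  assume "\<not> p ^ multiplicity p (2 * n choose n) \<le> 2 * n"
  then have big: "2 * n < p ^ v"
    by (simp add: v_def)
  have p1: "1 < p"
    using prime_gt_1_nat[OF p] .
  have "multiplicity p (fact (2 * n) :: nat) = 2 * multiplicity p (fact n :: nat) + v"
    using p by (simp add: fact_double_eq_central_binomial prime_elem_multiplicity_mult_distrib v_def)
  then have "(\<Sum>i=1..2 * n. 2 * n div p ^ i) = (\<Sum>i=1..2 * n. 2 * (n div p ^ i)) + v"
    using multiplicity_fact_nat[OF p, of "2 * n" "2 * n"] multiplicity_fact_nat[OF p, of n "2 * n"]
    by (simp add: sum_distrib_left)
  then have "v = (\<Sum>i=1..2 * n. 2 * n div p ^ i) - (\<Sum>i=1..2 * n. 2 * (n div p ^ i))"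
    by simp
  also have "\<dots> = (\<Sum>i=1..2 * n. 2 * n div p ^ i - 2 * (n div p ^ i))"
    using double_div_bounds(1) p1 by (intro sum_subtractf_nat[symmetric]) simp
  also have "\<dots> \<le> (\<Sum>i=1..2 * n. if p ^ i \<le> 2 * n then 1 else 0)"
  proof (intro sum_mono)
    fix i
    have "2 * n div p ^ i \<le> 2 * (n div p ^ i) + 1"
      using double_div_bounds(2) p1 by simp
    then show "2 * n div p ^ i - 2 * (n div p ^ i) \<le> (if p ^ i \<le> 2 * n then 1 else 0)"
      by (cases "p ^ i \<le> 2 * n") (simp_all add: div_less)
  qed
  also have "\<dots> = card {i\<in>{1..2 * n}. p ^ i \<le> 2 * n}"
    by (simp add: sum.If_cases Int_def conj_commute)
  also have "\<dots> \<le> card {1..<v}"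
  proof (intro card_mono subsetI)
    fix i
    assume "i \<in> {i\<in>{1..2 * n}. p ^ i \<le> 2 * n}"
    then have "1 \<le> i" and "p ^ i < p ^ v"
      using big by auto
    then show "i \<in> {1..<v}"
      using p1 by simp
  qed simp
  also have "\<dots> < v"
    using big \<open>0 < n\<close> by (cases v) auto
  finally show False
    by simp
qed

definition primes_pi :: "nat \<Rightarrow> nat" where
  "primes_pi x = card {p. prime p \<and> p \<le> x}"

lemma central_binomial_le_power_primes_pi:
  fixes n :: nat
  assumes "0 < n"
  shows "2 * n choose n \<le> (2 * n) ^ primes_pi (2 * n)"
proof -
  let ?C = "2 * n choose n"
  have "?C dvd fact (2 * n)"
    by (subst fact_double_eq_central_binomial) (rule dvd_triv_right)
  have "prime_factors ?C \<subseteq> {p. prime p \<and> p \<le> 2 * n}"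
  proof
    fix p
    assume "p \<in> prime_factors ?C"
    then have "prime p" and "p dvd fact (2 * n)"
      using dvd_trans[OF _ \<open>?C dvd fact (2 * n)\<close>] by (auto simp: in_prime_factors_iff)
    then show "p \<in> {p. prime p \<and> p \<le> 2 * n}"
      by (simp add: prime_dvd_fact_iff)
  qed
  then have "card (prime_factors ?C) \<le> primes_pi (2 * n)"
    unfolding primes_pi_def by (intro card_mono) simp_all
  have "?C = (\<Prod>p\<in>prime_factors ?C. p ^ multiplicity p ?C)"
    by (rule prime_factorization_nat) simp
  also have "\<dots> \<le> (\<Prod>p\<in>prime_factors ?C. 2 * n)"
  proof (intro prod_mono conjI)
    fix p
    assume "p \<in> prime_factors ?C"
    then have "prime p"
      by (simp add: in_prime_factors_iff)
    then show "p ^ multiplicity p ?C \<le> 2 * n"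
      using prime_power_multiplicity_central_binomial_le \<open>0 < n\<close> by blast
  qed simp
  also have "\<dots> = (2 * n) ^ card (prime_factors ?C)"
    by simp
  also have "\<dots> \<le> (2 * n) ^ primes_pi (2 * n)"
    using \<open>card (prime_factors ?C) \<le> primes_pi (2 * n)\<close> \<open>0 < n\<close> by (intro power_increasing) simp_all
  finally show ?thesis .
qed

lemma primes_pi_lower_bound:
  fixes n :: nat
  assumes "0 < n"
  shows "real n * ln 4 - ln (2 * n) \<le> real (primes_pi (2 * n)) * ln (2 * n)"
proof -
  have "4 ^ n / (2 * real n) \<le> real (2 * n choose n)"
    using central_binomial_lower_bound assms by simp
  also have "\<dots> \<le> real ((2 * n) ^ primes_pi (2 * n))"
    using central_binomial_le_power_primes_pi[OF assms] by (rule of_nat_mono)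
  also have "\<dots> = (2 * real n) ^ primes_pi (2 * n)"
    by simp
  finally have "ln (4 ^ n / (2 * real n)) \<le> ln ((2 * real n) ^ primes_pi (2 * n))"
    using assms by (subst ln_le_cancel_iff) auto
  moreover have "ln (4 ^ n / (2 * real n)) = real n * ln 4 - ln (2 * real n)"
    using assms by (simp add: ln_div ln_realpow)
  moreover have "ln ((2 * real n) ^ primes_pi (2 * n)) = real (primes_pi (2 * n)) * ln (2 * real n)"
    by (rule ln_realpow)
  ultimately show ?thesis
    by simp
qed

lemma enumerate_primes_ge: "i + 2 \<le> enumerate {p::nat. prime p} i"
proof (induction i)
  case 0
  have "prime (enumerate {p::nat. prime p} 0)"
    using enumerate_in_set[OF primes_infinite] by simp
  from prime_ge_2_nat[OF this] show ?case
    by simp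
next
  case (Suc i)
  then show ?case
    using enumerate_step[OF primes_infinite, of i] by simp
qed

lemma less_nth_prime: "y < nth_prime y"
  using enumerate_primes_ge[of "y - 1"] by (simp add: nth_prime_def)

lemma nth_prime_le_if_le_primes_pi:
  assumes "1 \<le> y" and "y \<le> primes_pi x"
  shows "nth_prime y \<le> x"
proof (rule ccontr)
  let ?S = "{p::nat. prime p}"
  assume "\<not> nth_prime y \<le> x"
  then have big: "x < enumerate ?S (y - 1)"
    by (simp add: nth_prime_def)
  have "{p. prime p \<and> p \<le> x} \<subseteq> enumerate ?S ` {..<y - 1}"
  proof
    fix p
    assume "p \<in> {p. prime p \<and> p \<le> x}"
    then have "p \<in> ?S" and "p \<le> x"
      by auto
    then obtain i where i: "enumerate ?S i = p"
      using enumerate_Ex[OF primes_infinite] by blast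
    then have "i < y - 1"
      using big \<open>p \<le> x\<close> enumerate_mono_le_iff[OF primes_infinite, of "y - 1" i] by linarith
    then show "p \<in> enumerate ?S ` {..<y - 1}"
      using i by auto
  qed
  then have "primes_pi x \<le> card (enumerate ?S ` {..<y - 1})"
    unfolding primes_pi_def by (intro card_mono) auto
  also have "\<dots> \<le> y - 1"
    using card_image_le[of "{..<y - 1}" "enumerate ?S"] by simp
  finally show False
    using assms by linarith
qed

lemma one_le_ln_4: "1 \<le> ln (4::real)"
proof -
  have "ln (4::real) = 2 * ln 2"
    using ln_realpow[of 2 2] by simp
  then show ?thesis
    using ln2_ge_two_thirds by linarith
qed

lemma le_primes_pi_if_mult_ln_less:
  fixes m y :: nat
  assumes "0 < m" and "real y * ln (2 * m) < real m"
  shows "y \<le> primes_pi (2 * m)"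
proof (rule ccontr)
  assume "\<not> y \<le> primes_pi (2 * m)"
  then have "real (primes_pi (2 * m)) * ln (2 * m) \<le> (real y - 1) * ln (2 * m)"
    using \<open>0 < m\<close> by (intro mult_right_mono) simp_all
  then have "real m \<le> real y * ln (2 * m)"
    using primes_pi_lower_bound[OF \<open>0 < m\<close>] mult_left_mono[OF one_le_ln_4, of "real m"]
    by (simp add: algebra_simps)
  then show False
    using assms(2) by simp
qed

lemma eventually_nth_prime_le:
  "eventually (\<lambda>y. real (nth_prime y) \<le> 8 * real y * (ln (real y) + 1)) sequentially"
proof -
  have "eventually (\<lambda>y::nat. ln (8 * real y * (ln (real y) + 1)) < 4 * ln (real y)) sequentially"
    by real_asymp
  with eventually_ge_at_top[of "2::nat"] show ?thesis
  proof eventually_elim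
    case (elim y)
    then have "0 < ln (real y)"
      by simp
    define t where "t = nat \<lceil>ln (real y)\<rceil>"
    have t: "ln (real y) \<le> real t" "real t \<le> ln (real y) + 1" "1 \<le> t"
      using \<open>0 < ln (real y)\<close> unfolding t_def by linarith+
    define m where "m = 4 * y * t"
    have "0 < m"
      using elim t unfolding m_def by simp
    have "real y * real t \<le> real y * (ln (real y) + 1)"
      using t by (intro mult_left_mono) auto
    then have m_le: "real (2 * m) \<le> 8 * real y * (ln (real y) + 1)"
      unfolding m_def by simp
    have "real y * ln (2 * m) \<le> real y * ln (8 * real y * (ln (real y) + 1))"
      using m_le \<open>0 < m\<close> by (intro mult_left_mono) auto
    also have "\<dots> < real y * (4 * ln (real y))"
      using elim by (intro mult_strict_left_mono) simp_all
    also have "\<dots> \<le> real m"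
      using mult_left_mono[OF t(1), of "4 * real y"] unfolding m_def by (simp add: mult_ac)
    finally have "nth_prime y \<le> 2 * m"
      using elim \<open>0 < m\<close> by (simp add: nth_prime_le_if_le_primes_pi le_primes_pi_if_mult_ln_less)
    then show ?case
      using m_le by linarith
  qed
qed

lemma eventually_ln_nth_prime_le:
  "eventually (\<lambda>y. ln (real (nth_prime y)) \<le> ln (real y) + 11/10 * ln (ln (real y))) sequentially"
proof -
  have "eventually (\<lambda>y::nat. ln (8 * real y * (ln (real y) + 1))
      \<le> ln (real y) + 11/10 * ln (ln (real y))) sequentially"
    by real_asymp
  with eventually_nth_prime_le show ?thesis
  proof eventually_elim
    case (elim y)
    have "0 < real (nth_prime y)"
      using less_nth_prime[of y] by simp
    then show ?case
      using ln_mono[OF elim(1)] elim(2) by linarith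
  qed
qed

lemma ln_add_xlnx_mult_ln_le:
  fixes L s :: real
  assumes "1 \<le> L" and "1 \<le> s"
  shows "ln (L + s * ln s * ln L) \<le> ln L + 2 * ln s"
proof -
  have "0 \<le> s * ln s" and "0 \<le> ln L"
    using assms by simp_all
  have "s * ln s * ln L \<le> s * ln s * L"
    using ln_le_minus_one[of L] assms \<open>0 \<le> s * ln s\<close> by (intro mult_left_mono) auto
  also have "\<dots> \<le> (s\<^sup>2 - 1) * L"
  proof -
    have "s * ln s \<le> s * (s - 1)"
      using ln_le_minus_one[of s] assms by (intro mult_left_mono) auto
    then show ?thesis
      using assms by (intro mult_right_mono) (auto simp: power2_eq_square algebra_simps)
  qed
  finally have "L + s * ln s * ln L \<le> L * s\<^sup>2"
    by (simp add: algebra_simps)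
  moreover have "0 < L + s * ln s * ln L"
    using assms \<open>0 \<le> s * ln s\<close> \<open>0 \<le> ln L\<close> by (simp add: add_pos_nonneg)
  ultimately have "ln (L + s * ln s * ln L) \<le> ln (L * s\<^sup>2)"
    by (subst ln_le_cancel_iff) auto
  also have "\<dots> = ln L + 2 * ln s"
    using assms by (simp add: ln_mult ln_realpow)
  finally show ?thesis .
qed

lemma xlnx_increment_ge:
  fixes s :: real
  assumes "0 < s"
  shows "ln (s + 1) + s / (s + 1) \<le> (s + 1) * ln (s + 1) - s * ln s"
proof -
  have "ln (s / (s + 1)) \<le> s / (s + 1) - 1"
    using assms by (intro ln_le_minus_one) simp
  then have "1 / (s + 1) \<le> ln (s + 1) - ln s"
    using assms by (simp add: ln_div field_simps)
  then have "s / (s + 1) \<le> s * (ln (s + 1) - ln s)"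
    using assms mult_left_mono[of "1 / (s + 1)" _ s] by simp
  then show ?thesis
    by (simp add: algebra_simps)
qed

lemma ln_bound_le_xlnx_increment:
  fixes L s :: real
  assumes "1 \<le> L" and "22 \<le> ln L" and "1 \<le> s"
  shows "11/10 * ln (L + s * ln s * ln L) \<le> ((s + 1) * ln (s + 1) - s * ln s) * ln L"
proof -
  define w v where "w = ln L" and "v = ln (s + 1)"
  have "ln s \<le> v" and "ln 2 \<le> v"
    using assms unfolding v_def by simp_all
  then have "2/3 \<le> v"
    using ln2_ge_two_thirds by linarith
  have "1/2 \<le> s / (s + 1)"
    using assms by (simp add: field_simps)
  then have "v + 1/2 \<le> (s + 1) * ln (s + 1) - s * ln s"
    using xlnx_increment_ge[of s] assms unfolding v_def by linarith
  have "(v + 1/2) * w - (11/10 * w + 22/10 * v) = (v - 2/3) * (w - 22/10) + (w - 22) / 15"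
    by (simp add: field_simps)
  moreover have "0 \<le> (v - 2/3) * (w - 22/10)" and "0 \<le> (w - 22) / 15"
    using \<open>2/3 \<le> v\<close> assms unfolding w_def by simp_all
  ultimately have "11/10 * w + 22/10 * v \<le> (v + 1/2) * w"
    by linarith
  have "11/10 * ln (L + s * ln s * ln L) \<le> 11/10 * (w + 2 * ln s)"
    using ln_add_xlnx_mult_ln_le[of L s] assms unfolding w_def by simp
  also have "\<dots> \<le> (v + 1/2) * w"
    using \<open>ln s \<le> v\<close> \<open>11/10 * w + 22/10 * v \<le> (v + 1/2) * w\<close> by simp
  also have "\<dots> \<le> ((s + 1) * ln (s + 1) - s * ln s) * w"
    using \<open>v + 1/2 \<le> _\<close> assms unfolding w_def by (intro mult_right_mono) auto
  finally show ?thesis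
    unfolding w_def .
qed

lemma funpow_le_mult_ln_powr:
  fixes f :: "nat \<Rightarrow> nat" and x :: nat
  assumes grow: "\<And>y. x \<le> y \<Longrightarrow> y \<le> f y"
    and step: "\<And>y. x \<le> y \<Longrightarrow> ln (real (f y)) \<le> ln (real y) + 11/10 * ln (ln (real y))"
    and big: "exp (exp 22) \<le> real x"
  shows "real ((f ^^ i) x) \<le> real x * ln (real x) powr (real (i + 1) * ln (real (i + 1)))"
proof -
  define L where "L = ln (real x)"
  have "0 < real x"
    using big exp_gt_zero by (metis order_less_le_trans)
  then have "exp 22 \<le> L"
    using big unfolding L_def by (metis exp_gt_zero ln_exp ln_le_cancel_iff)
  then have "22 \<le> ln L"
    by (metis exp_gt_zero ln_ge_iff order_less_le_trans)
  have "1 \<le> L"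
    using \<open>exp 22 \<le> L\<close> one_le_exp_iff[of 22] by linarith
  have orbit_ge: "x \<le> (f ^^ i) x" for i
  proof (induction i)
    case (Suc i)
    then show ?case
      using grow[OF Suc] by simp
  qed simp
  have ln_bound: "ln ((f ^^ i) x) \<le> L + real (i + 1) * ln (real (i + 1)) * ln L" for i
  proof (induction i)
    case 0
    then show ?case
      by (simp add: L_def)
  next
    case (Suc i)
    define z s where "z = (f ^^ i) x" and "s = real (i + 1)"
    have "L \<le> ln z"
      using orbit_ge[of i] \<open>0 < real x\<close> unfolding z_def L_def by simp
    then have "ln (ln z) \<le> ln (L + s * ln s * ln L)"
      using Suc \<open>1 \<le> L\<close> unfolding z_def s_def by simp
    have "ln (f z) \<le> ln z + 11/10 * ln (ln z)"
      using step orbit_ge unfolding z_def by blast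
    also have "\<dots> \<le> (L + s * ln s * ln L) + 11/10 * ln (L + s * ln s * ln L)"
      using Suc \<open>ln (ln z) \<le> _\<close> unfolding z_def s_def by simp
    also have "\<dots> \<le> (L + s * ln s * ln L) + ((s + 1) * ln (s + 1) - s * ln s) * ln L"
      using ln_bound_le_xlnx_increment[of L s] \<open>1 \<le> L\<close> \<open>22 \<le> ln L\<close> unfolding s_def by simp
    finally show ?case
      unfolding z_def s_def by (simp add: algebra_simps)
  qed
  have "0 < (f ^^ i) x"
    using orbit_ge[of i] \<open>0 < real x\<close> by simp
  then have "real ((f ^^ i) x) = exp (ln (real ((f ^^ i) x)))"
    by simp
  also have "\<dots> \<le> exp (L + real (i + 1) * ln (real (i + 1)) * ln L)"
    using ln_bound by simp
  also have "\<dots> = exp L * L powr (real (i + 1) * ln (real (i + 1)))"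
    using \<open>1 \<le> L\<close> by (simp add: exp_add powr_def mult_ac)
  also have "exp L = real x"
    using \<open>0 < real x\<close> by (simp add: L_def)
  finally show ?thesis
    unfolding L_def .
qed

lemma eventually_funpow_le_mult_ln_powr:
  fixes f :: "nat \<Rightarrow> nat"
  assumes grow: "\<And>y. y \<le> f y"
    and step: "eventually (\<lambda>y. ln (real (f y)) \<le> ln (real y) + 11/10 * ln (ln (real y))) sequentially"
  shows "eventually (\<lambda>x. \<forall>i. real ((f ^^ i) x)
           \<le> real x * ln (real x) powr (real (i + 1) * ln (real (i + 1)))) sequentially"
proof -
  obtain Y where Y: "\<And>y. Y \<le> y \<Longrightarrow> ln (real (f y)) \<le> ln (real y) + 11/10 * ln (ln (real y))"
    using step unfolding eventually_sequentially by blast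
  have "eventually (\<lambda>x::nat. exp (exp 22) \<le> real x) sequentially"
    by real_asymp
  with eventually_ge_at_top[of Y] show ?thesis
  proof eventually_elim
    case (elim x)
    show ?case
      by (intro allI funpow_le_mult_ln_powr grow elim(2) Y[OF order_trans[OF elim(1)]])
  qed
qed

lemma iter_prime_add: "iter_prime (k + i) n = (nth_prime ^^ i) (iter_prime k n)"
  by (induction i) simp_all

lemma le_iter_prime: "k \<le> iter_prime k n"
  by (induction k) (auto intro: Suc_leI le_less_trans less_nth_prime)

theorem theorem9:
  fixes n :: nat
  assumes "n \<ge> 1"
  shows "\<exists>k0::nat. \<forall>k j::nat. k0 \<le> k \<and> k \<le> j \<longrightarrow>
           real (iter_prime j n) \<le> real (iter_prime k n) *
             ln (real (iter_prime k n)) powr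
               (real (j - k + 1) * ln (real (j - k + 1)))"
proof -
  obtain k0 where k0: "\<And>x i. k0 \<le> x \<Longrightarrow>
      real ((nth_prime ^^ i) x) \<le> real x * ln (real x) powr (real (i + 1) * ln (real (i + 1)))"
    using eventually_funpow_le_mult_ln_powr[OF less_imp_le[OF less_nth_prime] eventually_ln_nth_prime_le]
    unfolding eventually_sequentially by blast
  show ?thesis
  proof (intro exI[of _ k0] allI impI, elim conjE)
    fix k j :: nat
    assume "k0 \<le> k" and "k \<le> j"
    then have "k0 \<le> iter_prime k n"
      using le_iter_prime order_trans by blast
    with k0[of "iter_prime k n" "j - k"] \<open>k \<le> j\<close> show "real (iter_prime j n) \<le> real (iter_prime k n) *
        ln (real (iter_prime k n)) powr (real (j - k + 1) * ln (real (j - k + 1)))"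
      by (simp add: iter_prime_add[symmetric])
  qed
qed

end
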